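(* Let $N\ge 1$ and let $S\subset\mathbb{P}^1\times\mathbb{P}^1$ be a real curve of bidegree $(N,N)$ not intersecting the anti-diagonal $\bar\Delta$, and suppose $S$ admits a grid determined by distinct points $\gamma_0,\dots,\gamma_N\in\mathbb{C}$, i.e. $$\{(-1/\bar\gamma_i,\gamma_j)\ :\ 0\le i\neq j\le N\}\subset S .$$ Then there exist positive real numbers $\lambda_0,\dots,\lambda_N$ such that $S$ is the curve $$\sum_{i=0}^N\lambda_i^2\prod_{\substack{j=0\\ j\neq i}}^N(\zeta-\gamma_j)(1+\eta\bar\gamma_j)=0,$$ i.e. $S$ is the spectral curve determined by the JNR data with poles $\gamma_0,\dots,\gamma_N$ and weights $\lambda_0,\dots,\lambda_N$.
   Context: $\mathbb{P}^1\times\mathbb{P}^1$ has affine coordinates $(\eta,\zeta)$. A curve of bidegree $(N,N)$ is the zero set of a nonzero polynomial $p(\eta,\zeta)$ of degree at most $N$ in each variable (a section of $\mathcal{O}(N,N)$). The anti-diagonal is $\bar\Delta=\{(\eta,\zeta):\eta=-1/\bar\zeta\}$. The curve is real if it is invariant under the anti-holomorphic involution $\tau(\eta,\zeta)=(-1/\bar\zeta,-1/\bar\eta)$. For $\gamma=0$ the point $-1/\bar\gamma$ means $\infty\in\mathbb{P}^1$. A grid determined by distinct points $\gamma_0,\dots,\gamma_N$ is the set $\{(-1/\bar\gamma_i,\gamma_j):0\le i\neq j\le N\}$, and a curve admits a grid if it contains such a set. *)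

theory Defs
  imports Complex_Main
begin

text \<open>Points of P^1 are represented by complex option: Some z is the
affine coordinate z, None is the point at infinity.\<close>

type_synonym P1 = "complex option"

fun hc :: "P1 \<Rightarrow> complex \<times> complex" where
  "hc None = (0, 1)"
| "hc (Some z) = (1, z)"

fun antip :: "P1 \<Rightarrow> P1" where
  "antip None = Some 0"
| "antip (Some z) = (if z = 0 then None else Some (- 1 / cnj z))"

definition tau :: "P1 \<times> P1 \<Rightarrow> P1 \<times> P1" where
  "tau pq = (antip (snd pq), antip (fst pq))"

definition antidiag :: "(P1 \<times> P1) set" where
  "antidiag = {(antip z, z) | z. True}"

definition curve_of :: "(complex \<times> complex \<Rightarrow> complex \<times> complex \<Rightarrow> complex) \<Rightarrow> (P1 \<times> P1) set" where
  "curve_of F = {(x, y). F (hc x) (hc y) = 0}"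

text \<open>Bidegree (N,N) homogenisation of p(eta,zeta) = sum_{i,j<=N} c i j eta^i zeta^j.
  Homogeneous coordinates (a0,a1) for eta = a1/a0 and (b0,b1) for zeta = b1/b0.\<close>
definition bihom :: "nat \<Rightarrow> (nat \<Rightarrow> nat \<Rightarrow> complex) \<Rightarrow> complex \<times> complex \<Rightarrow> complex \<times> complex \<Rightarrow> complex" where
  "bihom N c a b = (\<Sum>i\<le>N. \<Sum>j\<le>N. c i j * snd a ^ i * fst a ^ (N - i) * snd b ^ j * fst b ^ (N - j))"

definition jnr_hom :: "nat \<Rightarrow> (nat \<Rightarrow> complex) \<Rightarrow> (nat \<Rightarrow> real) \<Rightarrow> complex \<times> complex \<Rightarrow> complex \<times> complex \<Rightarrow> complex" where
  "jnr_hom N \<gamma> lam a b = (\<Sum>i\<le>N. complex_of_real ((lam i)\<^sup>2) *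
      (\<Prod>j\<in>{..N} - {i}. (snd b - \<gamma> j * fst b) * (fst a + snd a * cnj (\<gamma> j))))"

end

theory Submission
  imports Defs "HOL-Computational_Algebra.Polynomial" "HOL-Complex_Analysis.Complex_Analysis"
begin

text \<open>Interpolating in each variable at the nodes of the grid shows that a curve of bidegree
  (N, N) through the grid is cut out by a sum over k of d k * A k(\<eta>) * B k(\<zeta>), where A k and
  B k are the Lagrange products vanishing at all nodes but the k-th; missing the antidiagonal
  forces every d k to be nonzero. Reality says that the form with coefficients cnj d vanishes
  wherever the original one does; on a fibre with N distinct roots, which Hurwitz's theorem
  provides near a pole, this makes the two forms proportional, so all ratios d k / d 0 are real.
  On the antidiagonal the form is, up to a nonzero factor, the sum over k of
  (d k / d 0) * prod (j \<noteq> k) |z - \<gamma> j|^2, which has the sign of d k / d 0 at z = \<gamma> k.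
  It never vanishes, so all ratios are positive, and \<lambda> k = sqrt (d k / d 0) works.\<close>

lemma sum_eq_single:
  assumes "finite I" "l \<in> I" "\<And>k. k \<in> I \<Longrightarrow> k \<noteq> l \<Longrightarrow> f k = 0"
  shows "(\<Sum>k\<in>I. f k) = f l"
  using assms by (simp add: sum.remove sum.neutral)

lemma coeff_mult_at_degree_bounds:
  fixes p q :: "'a::idom poly"
  assumes "degree p \<le> m" "degree q \<le> n"
  shows "coeff (p * q) (m + n) = coeff p m * coeff q n"
proof (cases "degree p = m \<and> degree q = n")
  case True
  then show ?thesis using coeff_mult_degree_sum[of p q] by simp
next
  case False
  then have "coeff p m * coeff q n = 0"
    using assms by (metis coeff_eq_0 le_neq_implies_less mult_eq_0_iff)
  moreover have "degree (p * q) < m + n"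
    using False assms by (cases "p = 0 \<or> q = 0") (auto simp: degree_mult_eq)
  ultimately show ?thesis by (simp add: coeff_eq_0)
qed

text \<open>The homogenisation of a polynomial of degree at most n; a0 = 0 is the point at infinity.\<close>
definition binary_form :: "nat \<Rightarrow> (complex \<times> complex \<Rightarrow> complex) \<Rightarrow> bool" where
  "binary_form n F \<longleftrightarrow> (\<exists>p. degree p \<le> n \<and>
      (\<forall>a0 a1. a0 \<noteq> 0 \<longrightarrow> F (a0, a1) = a0 ^ n * poly p (a1 / a0)) \<and>
      (\<forall>a1. F (0, a1) = coeff p n * a1 ^ n))"

lemma binary_formE:
  assumes "binary_form n F"
  obtains p where "degree p \<le> n" "\<And>a0 a1. a0 \<noteq> 0 \<Longrightarrow> F (a0, a1) = a0 ^ n * poly p (a1 / a0)"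
    "\<And>a1. F (0, a1) = coeff p n * a1 ^ n"
  using assms unfolding binary_form_def by blast

lemma binary_form_zero: "binary_form n (\<lambda>a. 0)"
  unfolding binary_form_def by (rule exI[of _ 0]) auto

lemma binary_form_lincomb:
  assumes "binary_form n F" "binary_form n G"
  shows "binary_form n (\<lambda>a. u * F a + v * G a)"
proof -
  obtain p where p: "degree p \<le> n" "\<And>a0 a1. a0 \<noteq> 0 \<Longrightarrow> F (a0, a1) = a0 ^ n * poly p (a1 / a0)"
    "\<And>a1. F (0, a1) = coeff p n * a1 ^ n" using assms(1) by (elim binary_formE) blast
  obtain q where q: "degree q \<le> n" "\<And>a0 a1. a0 \<noteq> 0 \<Longrightarrow> G (a0, a1) = a0 ^ n * poly q (a1 / a0)"
    "\<And>a1. G (0, a1) = coeff q n * a1 ^ n" using assms(2) by (elim binary_formE) blast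
  have "degree (smult u p + smult v q) \<le> n"
    by (meson degree_add_le degree_smult_le order.trans p(1) q(1))
  then show ?thesis
    unfolding binary_form_def using p q
    by (intro exI[of _ "smult u p + smult v q"]) (simp add: ring_distribs)
qed

lemma binary_form_sum:
  assumes "finite I" "\<And>i. i \<in> I \<Longrightarrow> binary_form n (F i)"
  shows "binary_form n (\<lambda>a. \<Sum>i\<in>I. u i * F i a)"
  using assms
proof (induction I rule: finite_induct)
  case empty
  then show ?case by (simp add: binary_form_zero)
next
  case (insert x I)
  then have "binary_form n (\<lambda>a. u x * F x a + 1 * (\<Sum>i\<in>I. u i * F i a))"
    by (intro binary_form_lincomb) auto
  then show ?case using insert.hyps by simp
qed

lemma binary_form_mult:
  assumes "binary_form m F" "binary_form n G"
  shows "binary_form (m + n) (\<lambda>a. F a * G a)"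
proof -
  obtain p where p: "degree p \<le> m" "\<And>a0 a1. a0 \<noteq> 0 \<Longrightarrow> F (a0, a1) = a0 ^ m * poly p (a1 / a0)"
    "\<And>a1. F (0, a1) = coeff p m * a1 ^ m" using assms(1) by (elim binary_formE) blast
  obtain q where q: "degree q \<le> n" "\<And>a0 a1. a0 \<noteq> 0 \<Longrightarrow> G (a0, a1) = a0 ^ n * poly q (a1 / a0)"
    "\<And>a1. G (0, a1) = coeff q n * a1 ^ n" using assms(2) by (elim binary_formE) blast
  have "degree (p * q) \<le> m + n"
    by (meson add_mono degree_mult_le order.trans p(1) q(1))
  then show ?thesis
    unfolding binary_form_def using p q coeff_mult_at_degree_bounds[OF p(1) q(1)]
    by (intro exI[of _ "p * q"]) (simp add: power_add)
qed

lemma binary_form_prod_linear: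
  assumes "finite J"
  shows "binary_form (card J) (\<lambda>a. \<Prod>j\<in>J. \<alpha> j * fst a + \<beta> j * snd a)"
  using assms
proof (induction J rule: finite_induct)
  case empty
  show ?case unfolding binary_form_def by (rule exI[of _ 1]) auto
next
  case (insert x J)
  have "binary_form 1 (\<lambda>a. \<alpha> x * fst a + \<beta> x * snd a)"
    unfolding binary_form_def by (rule exI[of _ "[:\<alpha> x, \<beta> x:]"]) (auto simp: field_simps)
  then have "binary_form (1 + card J)
      (\<lambda>a. (\<alpha> x * fst a + \<beta> x * snd a) * (\<Prod>j\<in>J. \<alpha> j * fst a + \<beta> j * snd a))"
    using insert.IH by (rule binary_form_mult)
  then show ?case using insert.hyps by simp
qed

lemma binary_form_monomials: "binary_form n (\<lambda>a. \<Sum>i\<le>n. e i * snd a ^ i * fst a ^ (n - i))"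
proof -
  define p where "p = (\<Sum>i\<le>n. monom (e i) i)"
  have deg: "degree p \<le> n"
    unfolding p_def by (intro degree_sum_le) (auto intro: order.trans[OF degree_monom_le])
  have "(\<Sum>i\<le>n. e i * a1 ^ i * a0 ^ (n - i)) = a0 ^ n * poly p (a1 / a0)" if "a0 \<noteq> 0" for a0 a1
  proof -
    have "a0 ^ n * (a1 / a0) ^ i = a1 ^ i * a0 ^ (n - i)" if "i \<le> n" for i
    proof -
      have "a0 ^ n = a0 ^ (n - i) * a0 ^ i" using that by (simp flip: power_add)
      then show ?thesis using \<open>a0 \<noteq> 0\<close> by (simp add: power_divide)
    qed
    then show ?thesis
      unfolding p_def poly_sum poly_monom sum_distrib_left
      by (intro sum.cong) (auto simp: mult_ac)
  qed
  moreover have "(\<Sum>i\<le>n. e i * a1 ^ i * 0 ^ (n - i)) = coeff p n * a1 ^ n" for a1 :: complex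
    by (subst sum_eq_single[of _ n]) (auto simp: p_def coeff_sum)
  ultimately show ?thesis
    unfolding binary_form_def using deg by (intro exI[of _ p]) auto
qed

lemma binary_form_eq_0_if_many_zeros:
  assumes "binary_form n F" "finite X" "card X > n" "\<And>x. x \<in> X \<Longrightarrow> F (hc x) = 0"
  shows "F a = 0"
proof -
  obtain p where p: "degree p \<le> n" "\<And>a0 a1. a0 \<noteq> 0 \<Longrightarrow> F (a0, a1) = a0 ^ n * poly p (a1 / a0)"
    "\<And>a1. F (0, a1) = coeff p n * a1 ^ n" using assms(1) by (elim binary_formE) blast
  have "p = 0"
  proof (rule ccontr)
    assume "p \<noteq> 0"
    define Y where "Y = {z. Some z \<in> X}"
    have "Y \<subseteq> {z. poly p z = 0}"
      using assms(4) p(2)[of 1] by (force simp: Y_def)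
    then have Y: "finite Y" "card Y \<le> degree p"
      using poly_roots_finite[OF \<open>p \<noteq> 0\<close>] card_poly_roots_bound[OF \<open>p \<noteq> 0\<close>]
      by (auto intro: finite_subset dest: card_mono)
    have X_sub: "X \<subseteq> insert None (Some ` Y)"
    proof
      fix x assume "x \<in> X"
      then show "x \<in> insert None (Some ` Y)" by (cases x) (auto simp: Y_def)
    qed
    show False
    proof (cases "None \<in> X")
      case True
      then have "coeff p n = 0" using assms(4)[of None] p(3)[of 1] by simp
      then have "degree p < n" using p(1) \<open>p \<noteq> 0\<close>
        by (metis le_neq_implies_less leading_coeff_0_iff)
      have "card X \<le> card (insert None (Some ` Y))"
        using X_sub Y(1) by (intro card_mono) auto
      also have "\<dots> \<le> Suc (card Y)"
        using Y(1) by (simp add: card_insert_if card_image)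
      finally show False using Y(2) \<open>degree p < n\<close> assms(3) by linarith
    next
      case False
      then have "X \<subseteq> Some ` Y" using X_sub by blast
      then have "card X \<le> card Y"
        using Y(1) card_mono[of "Some ` Y" X] by (simp add: card_image)
      then show False using Y(2) p(1) assms(3) by linarith
    qed
  qed
  then show ?thesis using p(2,3) by (cases a; cases "fst a = 0") auto
qed

lemma binary_form_interpolation:
  assumes F: "binary_form n F" and I: "finite I" "card I > n"
    and L: "\<And>k. k \<in> I \<Longrightarrow> binary_form n (L k)" and w: "inj_on w I"
    and vanish: "\<And>k l. k \<in> I \<Longrightarrow> l \<in> I \<Longrightarrow> l \<noteq> k \<Longrightarrow> L k (hc (w l)) = 0"
    and nonzero: "\<And>k. k \<in> I \<Longrightarrow> L k (hc (w k)) \<noteq> 0"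
  shows "F a = (\<Sum>k\<in>I. F (hc (w k)) / L k (hc (w k)) * L k a)"
proof -
  define G where "G a = 1 * F a + (-1) * (\<Sum>k\<in>I. F (hc (w k)) / L k (hc (w k)) * L k a)" for a
  have "binary_form n G"
    unfolding G_def by (intro binary_form_lincomb F binary_form_sum I L)
  moreover have "finite (w ` I)" "card (w ` I) > n"
    using I w by (simp_all add: card_image)
  moreover have "G (hc x) = 0" if x: "x \<in> w ` I" for x
  proof -
    obtain l where "l \<in> I" "x = w l" using x by blast
    moreover have "(\<Sum>k\<in>I. F (hc (w k)) / L k (hc (w k)) * L k (hc (w l))) = F (hc (w l))"
      by (subst sum_eq_single[of _ l]) (use I \<open>l \<in> I\<close> vanish nonzero in auto)
    ultimately show ?thesis unfolding G_def by simp
  qed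
  ultimately have "G a = 0"
    by (rule binary_form_eq_0_if_many_zeros)
  then show ?thesis unfolding G_def by simp
qed

lemma binary_form_bihom_fst: "binary_form N (\<lambda>a. bihom N c a b)"
proof -
  have "bihom N c a b = (\<Sum>i\<le>N. (\<Sum>j\<le>N. c i j * snd b ^ j * fst b ^ (N - j)) * snd a ^ i * fst a ^ (N - i))" for a
    unfolding bihom_def by (simp add: sum_distrib_left mult_ac)
  then show ?thesis using binary_form_monomials[of N] by simp
qed

lemma binary_form_bihom_snd: "binary_form N (\<lambda>b. bihom N c a b)"
proof -
  have "bihom N c a b = (\<Sum>j\<le>N. (\<Sum>i\<le>N. c i j * snd a ^ i * fst a ^ (N - i)) * snd b ^ j * fst b ^ (N - j))" for b
    unfolding bihom_def by (subst sum.swap) (simp add: sum_distrib_left mult_ac)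
  then show ?thesis using binary_form_monomials[of N] by simp
qed

definition lagrange_fst :: "(nat \<Rightarrow> complex) \<Rightarrow> nat \<Rightarrow> nat \<Rightarrow> complex \<times> complex \<Rightarrow> complex" where
  "lagrange_fst \<gamma> N i a = (\<Prod>j\<in>{..N} - {i}. fst a + snd a * cnj (\<gamma> j))"

definition lagrange_snd :: "(nat \<Rightarrow> complex) \<Rightarrow> nat \<Rightarrow> nat \<Rightarrow> complex \<times> complex \<Rightarrow> complex" where
  "lagrange_snd \<gamma> N i b = (\<Prod>j\<in>{..N} - {i}. snd b - \<gamma> j * fst b)"

definition grid_form ::
    "(nat \<Rightarrow> complex) \<Rightarrow> nat \<Rightarrow> (nat \<Rightarrow> complex) \<Rightarrow> complex \<times> complex \<Rightarrow> complex \<times> complex \<Rightarrow> complex" where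
  "grid_form \<gamma> N d a b = (\<Sum>k\<le>N. d k * lagrange_fst \<gamma> N k a * lagrange_snd \<gamma> N k b)"

lemma jnr_hom_eq_grid_form: "jnr_hom N \<gamma> lam = grid_form \<gamma> N (\<lambda>k. of_real ((lam k)\<^sup>2))"
  unfolding jnr_hom_def grid_form_def lagrange_fst_def lagrange_snd_def
  by (intro ext sum.cong refl) (simp add: prod.distrib mult_ac)

lemma binary_form_lagrange_fst: "i \<le> N \<Longrightarrow> binary_form N (lagrange_fst \<gamma> N i)"
  using binary_form_prod_linear[of "{..N} - {i}" "\<lambda>_. 1" "\<lambda>j. cnj (\<gamma> j)"]
  unfolding lagrange_fst_def by (simp add: mult.commute)

lemma binary_form_lagrange_snd: "i \<le> N \<Longrightarrow> binary_form N (lagrange_snd \<gamma> N i)"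
  using binary_form_prod_linear[of "{..N} - {i}" "\<lambda>j. - \<gamma> j" "\<lambda>_. 1"]
  unfolding lagrange_snd_def by simp

lemma antip_inj:
  assumes "antip (Some g) = antip (Some h)"
  shows "g = h"
proof (cases "g = 0 \<or> h = 0")
  case False
  then have "- 1 / cnj g = - 1 / cnj h" using assms by simp
  then show ?thesis by simp
qed (use assms in \<open>auto split: if_splits\<close>)

lemma antip_factor_eq_0_iff:
  "fst (hc (antip (Some g))) + snd (hc (antip (Some g))) * cnj h = 0 \<longleftrightarrow> g = h"
proof (cases "g = 0")
  case False
  then have "1 + (- 1 / cnj g) * cnj h = 0 \<longleftrightarrow> cnj g = cnj h"
    by (auto simp: field_simps)
  then show ?thesis using False by simp
qed auto

lemma lagrange_fst_at_antip:
  assumes "inj_on \<gamma> {..N}" "k \<le> N" "l \<le> N"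
  shows "lagrange_fst \<gamma> N k (hc (antip (Some (\<gamma> l)))) = 0 \<longleftrightarrow> l \<noteq> k"
  unfolding lagrange_fst_def prod_zero_iff[OF finite_Diff[OF finite_atMost]] antip_factor_eq_0_iff
  using assms by (auto simp: inj_on_eq_iff)

lemma lagrange_snd_eq_0_iff:
  "lagrange_snd \<gamma> N k (1, \<zeta>) = 0 \<longleftrightarrow> (\<exists>j\<in>{..N} - {k}. \<zeta> = \<gamma> j)"
  unfolding lagrange_snd_def by simp

lemma lagrange_snd_at_pole:
  assumes "inj_on \<gamma> {..N}" "k \<le> N" "l \<le> N"
  shows "lagrange_snd \<gamma> N k (1, \<gamma> l) = 0 \<longleftrightarrow> l \<noteq> k"
  using assms unfolding lagrange_snd_eq_0_iff by (auto simp: inj_on_eq_iff)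

lemma grid_form_at_diagonal_grid_point:
  assumes "inj_on \<gamma> {..N}" "k \<le> N"
  shows "grid_form \<gamma> N d (hc (antip (Some (\<gamma> k)))) (hc (Some (\<gamma> k))) =
    d k * lagrange_fst \<gamma> N k (hc (antip (Some (\<gamma> k)))) * lagrange_snd \<gamma> N k (hc (Some (\<gamma> k)))"
  unfolding grid_form_def
  by (rule sum_eq_single) (use assms in \<open>auto simp: lagrange_fst_at_antip simp del: antip.simps\<close>)

text \<open>Interpolate first in \<eta> at the nodes -1/cnj (\<gamma> k), then in \<zeta> at the nodes \<gamma> l; the
  grid kills all off-diagonal terms.\<close>
lemma bihom_eq_grid_form:
  assumes inj: "inj_on \<gamma> {..N}"
    and grid: "\<And>i j. i \<le> N \<Longrightarrow> j \<le> N \<Longrightarrow> i \<noteq> j \<Longrightarrow>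
      bihom N c (hc (antip (Some (\<gamma> i)))) (hc (Some (\<gamma> j))) = 0"
  shows "\<exists>d. bihom N c = grid_form \<gamma> N d"
proof -
  define u where "u k = hc (antip (Some (\<gamma> k)))" for k
  define v where "v k = hc (Some (\<gamma> k))" for k
  let ?A = "lagrange_fst \<gamma> N" and ?B = "lagrange_snd \<gamma> N"
  define d where "d k = bihom N c (u k) (v k) / (?A k (u k) * ?B k (v k))" for k
  have A_nonzero: "?A k (u k) \<noteq> 0" if "k \<le> N" for k
    using lagrange_fst_at_antip[OF inj that that] by (simp add: u_def del: antip.simps)
  have inj_antip: "inj_on (\<lambda>k. antip (Some (\<gamma> k))) {..N}"
    using inj by (auto simp: inj_on_def dest: antip_inj)
  have inj_Some: "inj_on (\<lambda>k. Some (\<gamma> k)) {..N}"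
    using inj by (auto simp: inj_on_def)
  have fst_interp: "bihom N c a b = (\<Sum>k\<le>N. bihom N c (u k) b / ?A k (u k) * ?A k a)" for a b
    unfolding u_def
    by (rule binary_form_interpolation[OF binary_form_bihom_fst, where w = "\<lambda>k. antip (Some (\<gamma> k))"])
       (simp_all add: inj_antip binary_form_lagrange_fst lagrange_fst_at_antip[OF inj] del: antip.simps)
  have snd_interp: "bihom N c (u k) b = d k * ?A k (u k) * ?B k b" if "k \<le> N" for k b
  proof -
    have "bihom N c (u k) b = (\<Sum>l\<le>N. bihom N c (u k) (v l) / ?B l (v l) * ?B l b)"
      unfolding v_def
      by (rule binary_form_interpolation[OF binary_form_bihom_snd, where w = "\<lambda>k. Some (\<gamma> k)"])
         (simp_all add: inj_Some binary_form_lagrange_snd lagrange_snd_at_pole[OF inj])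
    also have "\<dots> = bihom N c (u k) (v k) / ?B k (v k) * ?B k b"
      by (rule sum_eq_single) (use that grid in \<open>auto simp: u_def v_def\<close>)
    also have "\<dots> = d k * ?A k (u k) * ?B k b"
      using A_nonzero[OF that] by (simp add: d_def)
    finally show ?thesis .
  qed
  have "bihom N c a b = grid_form \<gamma> N d a b" for a b
  proof -
    have "bihom N c a b = (\<Sum>k\<le>N. bihom N c (u k) b / ?A k (u k) * ?A k a)"
      by (rule fst_interp)
    also have "\<dots> = grid_form \<gamma> N d a b"
      unfolding grid_form_def by (intro sum.cong) (simp_all add: snd_interp A_nonzero)
    finally show ?thesis .
  qed
  then show ?thesis by blast
qed

lemma grid_form_lincomb:
  "grid_form \<gamma> N (\<lambda>i. u * d i + v * d' i) a b = u * grid_form \<gamma> N d a b + v * grid_form \<gamma> N d' a b"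
  unfolding grid_form_def by (simp add: sum.distrib sum_distrib_left algebra_simps)

lemma grid_form_fibre:
  "grid_form \<gamma> N d a (1, \<zeta>) =
    (\<Sum>i\<le>N. (d i * lagrange_snd \<gamma> N i (1, \<zeta>)) * lagrange_fst \<gamma> N i a)"
  unfolding grid_form_def by (simp add: mult_ac)

lemma grid_form_tau:
  assumes "\<eta> \<noteq> 0" "\<zeta> \<noteq> 0"
  shows "grid_form \<gamma> N d (1, - 1 / cnj \<zeta>) (1, - 1 / cnj \<eta>) =
    (- 1 / (cnj \<zeta> * cnj \<eta>)) ^ N * cnj (grid_form \<gamma> N (\<lambda>k. cnj (d k)) (1, \<eta>) (1, \<zeta>))"
proof -
  let ?c = "- 1 / (cnj \<zeta> * cnj \<eta>)"
  have factor: "(1 + (- 1 / cnj \<zeta>) * cnj (\<gamma> j)) * (- 1 / cnj \<eta> - \<gamma> j * 1) =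
      ?c * cnj ((1 + \<eta> * cnj (\<gamma> j)) * (\<zeta> - \<gamma> j * 1))" for j
    using assms by (simp add: field_simps)
  have product: "lagrange_fst \<gamma> N k (1, - 1 / cnj \<zeta>) * lagrange_snd \<gamma> N k (1, - 1 / cnj \<eta>) =
      ?c ^ N * cnj (lagrange_fst \<gamma> N k (1, \<eta>) * lagrange_snd \<gamma> N k (1, \<zeta>))" if "k \<le> N" for k
  proof -
    have "lagrange_fst \<gamma> N k (1, - 1 / cnj \<zeta>) * lagrange_snd \<gamma> N k (1, - 1 / cnj \<eta>) =
        (\<Prod>j\<in>{..N} - {k}. ?c * cnj ((1 + \<eta> * cnj (\<gamma> j)) * (\<zeta> - \<gamma> j * 1)))"
      unfolding lagrange_fst_def lagrange_snd_def prod.distrib[symmetric] fst_conv snd_conv factor ..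
    also have "\<dots> = ?c ^ N * (\<Prod>j\<in>{..N} - {k}. cnj ((1 + \<eta> * cnj (\<gamma> j)) * (\<zeta> - \<gamma> j * 1)))"
      by (subst prod.distrib) (simp add: that)
    also have "(\<Prod>j\<in>{..N} - {k}. cnj ((1 + \<eta> * cnj (\<gamma> j)) * (\<zeta> - \<gamma> j * 1))) =
        cnj (lagrange_fst \<gamma> N k (1, \<eta>) * lagrange_snd \<gamma> N k (1, \<zeta>))"
      unfolding lagrange_fst_def lagrange_snd_def fst_conv snd_conv cnj_prod complex_cnj_mult
      by (simp only: prod.distrib)
    finally show ?thesis .
  qed
  have "grid_form \<gamma> N d (1, - 1 / cnj \<zeta>) (1, - 1 / cnj \<eta>) =
      (\<Sum>k\<le>N. d k * (lagrange_fst \<gamma> N k (1, - 1 / cnj \<zeta>) * lagrange_snd \<gamma> N k (1, - 1 / cnj \<eta>)))"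
    unfolding grid_form_def by (simp add: mult.assoc)
  also have "\<dots> = (\<Sum>k\<le>N. ?c ^ N * cnj (cnj (d k) * lagrange_fst \<gamma> N k (1, \<eta>) * lagrange_snd \<gamma> N k (1, \<zeta>)))"
  proof (intro sum.cong refl)
    fix k assume "k \<in> {..N}"
    then show "d k * (lagrange_fst \<gamma> N k (1, - 1 / cnj \<zeta>) * lagrange_snd \<gamma> N k (1, - 1 / cnj \<eta>)) =
        ?c ^ N * cnj (cnj (d k) * lagrange_fst \<gamma> N k (1, \<eta>) * lagrange_snd \<gamma> N k (1, \<zeta>))"
      by (subst product) (simp_all add: mult_ac)
  qed
  also have "\<dots> = ?c ^ N * cnj (grid_form \<gamma> N (\<lambda>k. cnj (d k)) (1, \<eta>) (1, \<zeta>))"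
    unfolding grid_form_def by (simp add: sum_distrib_left)
  finally show ?thesis .
qed

lemma lagrange_fst_independent:
  assumes inj: "inj_on \<gamma> {..N}" and X: "finite X" "card X > N"
    and vanish: "\<And>x. x \<in> X \<Longrightarrow> (\<Sum>i\<le>N. e i * lagrange_fst \<gamma> N i (hc x)) = 0"
    and l: "l \<le> N"
  shows "e l = 0"
proof -
  let ?u = "hc (antip (Some (\<gamma> l)))"
  have "binary_form N (\<lambda>a. \<Sum>i\<le>N. e i * lagrange_fst \<gamma> N i a)"
    by (intro binary_form_sum) (simp_all add: binary_form_lagrange_fst)
  then have "(\<Sum>i\<le>N. e i * lagrange_fst \<gamma> N i ?u) = 0"
    using X vanish by (rule binary_form_eq_0_if_many_zeros)
  moreover have "(\<Sum>i\<le>N. e i * lagrange_fst \<gamma> N i ?u) = e l * lagrange_fst \<gamma> N l ?u"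
    by (rule sum_eq_single) (use l in \<open>simp_all add: lagrange_fst_at_antip[OF inj] del: antip.simps\<close>)
  moreover have "lagrange_fst \<gamma> N l ?u \<noteq> 0"
    using lagrange_fst_at_antip[OF inj l l] by (simp del: antip.simps)
  ultimately show ?thesis by simp
qed

text \<open>A combination of the two forms vanishing at one more point of the fibre has N + 1
  zeros there, so all its coefficients vanish.\<close>
lemma grid_form_proportional_if_common_roots:
  assumes inj: "inj_on \<gamma> {..N}" and k: "k \<le> N" "d k \<noteq> 0"
    and off_poles: "\<And>i. i \<le> N \<Longrightarrow> \<zeta> \<noteq> \<gamma> i"
    and R: "finite R" "card R = N"
    and roots: "\<And>\<eta>. \<eta> \<in> R \<Longrightarrow> grid_form \<gamma> N d (1, \<eta>) (1, \<zeta>) = 0"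
      "\<And>\<eta>. \<eta> \<in> R \<Longrightarrow> grid_form \<gamma> N d' (1, \<eta>) (1, \<zeta>) = 0"
  shows "\<exists>\<mu>. \<forall>l\<le>N. d' l = \<mu> * d l"
proof -
  let ?B = "\<lambda>i. lagrange_snd \<gamma> N i (1, \<zeta>)"
  have B_nonzero: "?B i \<noteq> 0" if "i \<le> N" for i
    using off_poles by (auto simp: lagrange_snd_eq_0_iff)
  have coeffs_vanish: "f l * ?B l = 0"
    if "finite X" "card X > N" "\<And>\<eta>. Some \<eta> \<in> X \<Longrightarrow> grid_form \<gamma> N f (1, \<eta>) (1, \<zeta>) = 0"
      "None \<notin> X" "l \<le> N" for f X l
  proof (rule lagrange_fst_independent[OF inj \<open>finite X\<close> \<open>card X > N\<close> _ \<open>l \<le> N\<close>])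
    fix x assume "x \<in> X"
    then show "(\<Sum>i\<le>N. f i * ?B i * lagrange_fst \<gamma> N i (hc x)) = 0"
      using that(3,4) grid_form_fibre[of \<gamma> N f "hc x" \<zeta>] by (cases x) auto
  qed
  have "\<exists>y. grid_form \<gamma> N d (1, y) (1, \<zeta>) \<noteq> 0"
  proof (rule ccontr)
    assume "\<nexists>y. grid_form \<gamma> N d (1, y) (1, \<zeta>) \<noteq> 0"
    moreover have "card ((\<lambda>m. Some (of_nat m :: complex)) ` {..N}) > N"
      by (subst card_image) (auto simp: inj_on_def)
    ultimately have "d k * ?B k = 0"
      by (intro coeffs_vanish[of "(\<lambda>m. Some (of_nat m :: complex)) ` {..N}"] k) auto
    then show False using k B_nonzero by simp
  qed
  then obtain y where y: "grid_form \<gamma> N d (1, y) (1, \<zeta>) \<noteq> 0" by blast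
  define p where "p = grid_form \<gamma> N d (1, y) (1, \<zeta>)"
  define q where "q = grid_form \<gamma> N d' (1, y) (1, \<zeta>)"
  have "y \<notin> R" using y roots(1) by auto
  then have card: "card (insert (Some y) (Some ` R)) > N"
    using R by (subst card_insert_disjoint) (auto simp: card_image)
  have "grid_form \<gamma> N (\<lambda>i. q * d i + (- p) * d' i) (1, \<eta>) (1, \<zeta>) = 0"
    if "\<eta> \<in> insert y R" for \<eta>
    unfolding grid_form_lincomb using that roots by (auto simp: p_def q_def)
  then have "(q * d l + (- p) * d' l) * ?B l = 0" if "l \<le> N" for l
    using R(1) card that by (intro coeffs_vanish[of "insert (Some y) (Some ` R)"]) auto
  then have "d' l = q / p * d l" if "l \<le> N" for l
    using that B_nonzero y by (simp add: p_def field_simps)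
  then show ?thesis by blast
qed

lemma uniform_limit_sum_scaled:
  fixes \<alpha> :: "'i \<Rightarrow> nat \<Rightarrow> complex" and \<phi> :: "'i \<Rightarrow> complex \<Rightarrow> complex"
  assumes "finite I" "\<And>i. i \<in> I \<Longrightarrow> \<alpha> i \<longlonglongrightarrow> a i" "compact K"
    "\<And>i. i \<in> I \<Longrightarrow> continuous_on K (\<phi> i)"
  shows "uniform_limit K (\<lambda>n z. \<Sum>i\<in>I. \<alpha> i n * \<phi> i z) (\<lambda>z. \<Sum>i\<in>I. a i * \<phi> i z) sequentially"
  using assms(1,2,4)
proof (induction I rule: finite_induct)
  case empty
  show ?case by (simp add: uniform_limit_const)
next
  case (insert i I)
  have "uniform_limit K (\<lambda>n z. \<alpha> i n) (\<lambda>z. a i) sequentially"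
    using insert.prems(1)[of i] by (auto simp: uniform_limit_iff tendsto_iff)
  moreover have "bounded (\<phi> i ` K)"
    using insert.prems(2)[of i] assms(3) by (intro compact_imp_bounded compact_continuous_image) auto
  moreover have "bounded ((\<lambda>z. a i) ` K)"
    by (rule bounded_subset[of "{a i}"]) auto
  ultimately have "uniform_limit K (\<lambda>n z. \<alpha> i n * \<phi> i z) (\<lambda>z. a i * \<phi> i z) sequentially"
    by (intro uniform_lim_mult uniform_limit_const)
  then have "uniform_limit K (\<lambda>n z. \<alpha> i n * \<phi> i z + (\<Sum>i\<in>I. \<alpha> i n * \<phi> i z))
      (\<lambda>z. a i * \<phi> i z + (\<Sum>i\<in>I. a i * \<phi> i z)) sequentially"
    by (intro uniform_limit_add insert.IH) (use insert.prems in auto)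
  then show ?case using insert.hyps by simp
qed

lemma eventually_zero_in_ball_if_uniform_limit:
  fixes f :: "nat \<Rightarrow> complex \<Rightarrow> complex"
  assumes hol_f: "\<And>n. f n holomorphic_on ball x r" and hol_g: "g holomorphic_on ball x r"
    and lim: "\<And>K. compact K \<Longrightarrow> K \<subseteq> ball x r \<Longrightarrow> uniform_limit K f g sequentially"
    and "g x = 0" "y \<in> ball x r" "g y \<noteq> 0"
  shows "eventually (\<lambda>n. \<exists>z\<in>ball x r. f n z = 0) sequentially"
proof (rule ccontr)
  assume no_zeros: "\<not> ?thesis"
  have "x \<in> ball x r"
    using \<open>y \<in> ball x r\<close> by (auto intro: le_less_trans[OF zero_le_dist])
  obtain \<sigma> :: "nat \<Rightarrow> nat" where \<sigma>: "strict_mono \<sigma>" "\<And>n z. z \<in> ball x r \<Longrightarrow> f (\<sigma> n) z \<noteq> 0"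
    using not_eventually_sequentiallyD[OF no_zeros] by blast
  have "g x \<noteq> 0"
  proof (rule Hurwitz_no_zeros[of "ball x r" "\<lambda>n. f (\<sigma> n)" g])
    fix K :: "complex set" assume "compact K" "K \<subseteq> ball x r"
    then show "uniform_limit K (\<lambda>n. f (\<sigma> n)) g sequentially"
      using filterlim_compose[OF lim filterlim_subseq[OF \<sigma>(1)]] by blast
  next
    show "\<not> g constant_on ball x r"
      using \<open>g x = 0\<close> \<open>x \<in> ball x r\<close> \<open>y \<in> ball x r\<close> \<open>g y \<noteq> 0\<close>
      unfolding constant_on_def by metis
  qed (use hol_f hol_g \<sigma>(2) \<open>x \<in> ball x r\<close> in auto)
  then show False using \<open>g x = 0\<close> by simp
qed

lemma grid_form_fibre_holomorphic: "(\<lambda>\<eta>. grid_form \<gamma> N d (1, \<eta>) (1, \<zeta>)) holomorphic_on A"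
  unfolding grid_form_def lagrange_fst_def lagrange_snd_def fst_conv snd_conv
  by (intro holomorphic_intros)

lemma grid_form_fibre_uniform_limit:
  assumes "zs \<longlonglongrightarrow> \<zeta>" "compact K"
  shows "uniform_limit K (\<lambda>n \<eta>. grid_form \<gamma> N d (1, \<eta>) (1, zs n))
    (\<lambda>\<eta>. grid_form \<gamma> N d (1, \<eta>) (1, \<zeta>)) sequentially"
  unfolding grid_form_fibre
proof (rule uniform_limit_sum_scaled[OF _ _ \<open>compact K\<close>])
  fix i
  show "(\<lambda>n. d i * lagrange_snd \<gamma> N i (1, zs n)) \<longlonglongrightarrow> d i * lagrange_snd \<gamma> N i (1, \<zeta>)"
    unfolding lagrange_snd_def using assms(1) by (intro tendsto_intros) auto
  show "continuous_on K (\<lambda>\<eta>. lagrange_fst \<gamma> N i (1, \<eta>))"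
    unfolding lagrange_fst_def by (intro continuous_intros)
qed simp

lemma grid_form_roots_persist:
  assumes "zs \<longlonglongrightarrow> \<zeta>" "grid_form \<gamma> N d (1, x) (1, \<zeta>) = 0"
    "y \<in> ball x r" "grid_form \<gamma> N d (1, y) (1, \<zeta>) \<noteq> 0"
  shows "eventually (\<lambda>n. \<exists>\<eta>\<in>ball x r. grid_form \<gamma> N d (1, \<eta>) (1, zs n) = 0) sequentially"
  using assms
  by (intro eventually_zero_in_ball_if_uniform_limit[where g = "\<lambda>\<eta>. grid_form \<gamma> N d (1, \<eta>) (1, \<zeta>)"]
      grid_form_fibre_holomorphic grid_form_fibre_uniform_limit)

lemma finite_disjoint_balls:
  fixes X :: "'a::metric_space set"
  assumes "finite X"
  shows "\<exists>r>0. \<forall>x\<in>X. \<forall>y\<in>X. x \<noteq> y \<longrightarrow> ball x r \<inter> ball y r = {}"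
  using assms
proof (induction X rule: finite_induct)
  case (insert a X)
  obtain r where r: "r > 0" "\<forall>x\<in>X. \<forall>y\<in>X. x \<noteq> y \<longrightarrow> ball x r \<inter> ball y r = {}"
    using insert.IH by blast
  obtain \<delta> where \<delta>: "\<delta> > 0" "\<forall>x\<in>X. x \<noteq> a \<longrightarrow> \<delta> \<le> dist a x"
    using finite_set_avoid[OF insert.hyps(1)] by blast
  define r' where "r' = min r (\<delta> / 2)"
  have "ball x r' \<inter> ball y r' = {}" if "x \<in> insert a X" "y \<in> insert a X" "x \<noteq> y" for x y
  proof (cases "x \<in> X \<and> y \<in> X")
    case True
    then have "ball x r \<inter> ball y r = {}" using r(2) that(3) by blast
    moreover have "ball z r' \<subseteq> ball z r" for z by (simp add: r'_def subset_ball)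
    ultimately show ?thesis by blast
  next
    case False
    then have "\<delta> \<le> dist x y" using that \<delta>(2) by (auto simp: dist_commute)
    then show ?thesis by (intro disjoint_ballI) (simp add: r'_def)
  qed
  then show ?case using r(1) \<delta>(1) unfolding r'_def by (intro exI[of _ "min r (\<delta> / 2)"]) auto
qed (auto intro: zero_less_one)

lemma eventually_not_in_finite_set:
  fixes zs :: "nat \<Rightarrow> 'a::t2_space"
  assumes "zs \<longlonglongrightarrow> z" "\<And>n. zs n \<noteq> z" "finite A"
  shows "eventually (\<lambda>n. zs n \<notin> A) sequentially"
proof -
  have "eventually (\<lambda>n. zs n \<noteq> w) sequentially" if "w \<in> A" for w
    using assms(2) tendsto_imp_eventually_ne[OF assms(1), of w] by (cases "w = z") auto
  then have "eventually (\<lambda>n. \<forall>w\<in>A. zs n \<noteq> w) sequentially"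
    by (intro eventually_ball_finite assms(3)) auto
  then show ?thesis by (rule eventually_mono) auto
qed

lemma grid_form_pole_fibre_eq_0_iff:
  assumes inj: "inj_on \<gamma> {..N}" and k: "k \<le> N" "d k \<noteq> 0"
  shows "grid_form \<gamma> N d (1, \<eta>) (1, \<gamma> k) = 0 \<longleftrightarrow>
    (\<exists>j\<in>{..N} - {k}. \<gamma> j \<noteq> 0 \<and> \<eta> = - 1 / cnj (\<gamma> j))"
proof -
  have "grid_form \<gamma> N d (1, \<eta>) (1, \<gamma> k) =
      d k * lagrange_snd \<gamma> N k (1, \<gamma> k) * lagrange_fst \<gamma> N k (1, \<eta>)"
    unfolding grid_form_fibre
    by (rule sum_eq_single) (use inj k in \<open>auto simp: lagrange_snd_at_pole\<close>)
  moreover have "lagrange_snd \<gamma> N k (1, \<gamma> k) \<noteq> 0"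
    using lagrange_snd_at_pole[OF inj k(1) k(1)] by simp
  moreover have "1 + \<eta> * cnj g = 0 \<longleftrightarrow> g \<noteq> 0 \<and> \<eta> = - 1 / cnj g" for g
    by (cases "g = 0") (auto simp: field_simps add_eq_0_iff)
  ultimately show ?thesis
    using k(2) by (simp add: lagrange_fst_def)
qed

lemma not_in_if_in_disjoint_ball:
  fixes X :: "'a::metric_space set"
  assumes disjoint: "\<And>x y. x \<in> X \<Longrightarrow> y \<in> X \<Longrightarrow> x \<noteq> y \<Longrightarrow> ball x r \<inter> ball y r = {}"
    and "x \<in> X" "y \<in> ball x r" "y \<noteq> x"
  shows "y \<notin> X"
proof
  assume "y \<in> X"
  have "y \<in> ball y r"
    using assms(3) by (auto intro: le_less_trans[OF zero_le_dist])
  then show False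
    using disjoint[OF assms(2) \<open>y \<in> X\<close>] assms(3,4) by blast
qed

lemma inj_on_if_in_disjoint_balls:
  assumes "\<And>x. x \<in> X \<Longrightarrow> f x \<in> ball x r"
    and "\<And>x y. x \<in> X \<Longrightarrow> y \<in> X \<Longrightarrow> x \<noteq> y \<Longrightarrow> ball x r \<inter> ball y r = {}"
  shows "inj_on f X"
proof (rule inj_onI)
  fix x y assume xy: "x \<in> X" "y \<in> X" "f x = f y"
  then have "f x \<in> ball x r" "f x \<in> ball y r" using assms(1)[of x] assms(1)[of y] by simp_all
  then show "x = y" using assms(2)[of x y] xy(1,2) by blast
qed

lemma inj_on_nonzero_except_one:
  assumes "inj_on \<gamma> A" "A \<noteq> {}"
  shows "\<exists>k\<in>A. \<forall>j\<in>A. j \<noteq> k \<longrightarrow> \<gamma> j \<noteq> 0"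
proof (cases "\<exists>m\<in>A. \<gamma> m = 0")
  case True
  then obtain m where "m \<in> A" "\<gamma> m = 0" by blast
  with assms(1) show ?thesis by (metis inj_onD)
qed (use assms(2) in blast)

text \<open>Over a pole \<gamma> k avoided by all other poles the fibre has the N simple roots
  -1/cnj (\<gamma> j), j \<noteq> k; moving \<zeta> slightly off the pole keeps one root near each of them.\<close>
lemma grid_form_fibre_with_distinct_roots:
  assumes inj: "inj_on \<gamma> {..N}" and d: "\<And>k. k \<le> N \<Longrightarrow> d k \<noteq> 0"
  shows "\<exists>\<zeta> R. \<zeta> \<notin> insert 0 (\<gamma> ` {..N}) \<and> finite R \<and> card R = N \<and> 0 \<notin> R \<and>
    (\<forall>\<eta>\<in>R. grid_form \<gamma> N d (1, \<eta>) (1, \<zeta>) = 0)"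
proof -
  obtain k where k: "k \<le> N" "\<And>j. j \<le> N \<Longrightarrow> j \<noteq> k \<Longrightarrow> \<gamma> j \<noteq> 0"
    using inj_on_nonzero_except_one[OF inj] by auto
  define X where "X = (\<lambda>j. - 1 / cnj (\<gamma> j)) ` ({..N} - {k})"
  have "inj_on (\<lambda>j. - 1 / cnj (\<gamma> j)) ({..N} - {k})"
    using inj by (auto simp: inj_on_def)
  moreover have "0 \<notin> X"
    using k(2) unfolding X_def by fastforce
  ultimately have X: "finite X" "card X = N" "0 \<notin> X"
    using k(1) by (simp_all add: X_def card_image)
  have pole_fibre: "grid_form \<gamma> N d (1, \<eta>) (1, \<gamma> k) = 0 \<longleftrightarrow> \<eta> \<in> X" for \<eta>
    using k by (auto simp: grid_form_pole_fibre_eq_0_iff[OF inj k(1) d] X_def)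
  obtain r where r: "r > 0" "\<forall>x\<in>insert 0 X. \<forall>y\<in>insert 0 X. x \<noteq> y \<longrightarrow> ball x r \<inter> ball y r = {}"
    using finite_disjoint_balls[of "insert 0 X"] X(1) by blast
  have disjoint: "ball x r \<inter> ball y r = {}" if "x \<in> insert 0 X" "y \<in> insert 0 X" "x \<noteq> y" for x y
    using r(2) that by blast
  have "\<gamma> k islimpt UNIV" by simp
  then obtain zs :: "nat \<Rightarrow> complex" where "\<forall>n. zs n \<in> UNIV - {\<gamma> k}" "zs \<longlonglongrightarrow> \<gamma> k"
    unfolding islimpt_sequential by blast
  then have zs: "zs \<longlonglongrightarrow> \<gamma> k" "\<And>n. zs n \<noteq> \<gamma> k" by auto
  have roots: "eventually (\<lambda>n. \<exists>\<eta>\<in>ball x r. grid_form \<gamma> N d (1, \<eta>) (1, zs n) = 0) sequentially"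
    if "x \<in> X" for x
  proof (rule grid_form_roots_persist[OF zs(1)])
    let ?y = "x + of_real (r / 2)"
    show "grid_form \<gamma> N d (1, x) (1, \<gamma> k) = 0" using pole_fibre that by simp
    show "?y \<in> ball x r" using r(1) by (simp add: dist_norm)
    then have "?y \<notin> insert 0 X"
      using r(1) that by (intro not_in_if_in_disjoint_ball[OF disjoint]) auto
    then show "grid_form \<gamma> N d (1, ?y) (1, \<gamma> k) \<noteq> 0" using pole_fibre by simp
  qed
  have "eventually (\<lambda>n. \<forall>x\<in>X. \<exists>\<eta>\<in>ball x r. grid_form \<gamma> N d (1, \<eta>) (1, zs n) = 0) sequentially"
    by (intro eventually_ball_finite X(1) ballI roots)
  moreover have "eventually (\<lambda>n. zs n \<notin> insert 0 (\<gamma> ` {..N})) sequentially"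
    by (rule eventually_not_in_finite_set[OF zs]) simp
  ultimately obtain n where n: "zs n \<notin> insert 0 (\<gamma> ` {..N})"
    "\<forall>x\<in>X. \<exists>\<eta>\<in>ball x r. grid_form \<gamma> N d (1, \<eta>) (1, zs n) = 0"
    using eventually_happens'[OF sequentially_bot eventually_conj] by blast
  then obtain rt where rt: "\<And>x. x \<in> X \<Longrightarrow> rt x \<in> ball x r \<and> grid_form \<gamma> N d (1, rt x) (1, zs n) = 0"
    by metis
  have "inj_on rt X"
    by (rule inj_on_if_in_disjoint_balls) (use rt disjoint in auto)
  moreover have "rt x \<noteq> 0" if "x \<in> X" for x
  proof
    assume "rt x = 0"
    then have "0 \<in> ball x r" using rt[OF that] by simp
    moreover have "x \<noteq> 0" using that X(3) by blast
    ultimately have "0 \<notin> insert 0 X"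
      using that by (intro not_in_if_in_disjoint_ball[OF disjoint]) auto
    then show False by simp
  qed
  ultimately have "inj_on rt X" "0 \<notin> rt ` X" by auto
  then show ?thesis
    using n(1) X rt by (intro exI[of _ "zs n"] exI[of _ "rt ` X"]) (auto simp: card_image)
qed

lemma grid_form_common_phase:
  assumes inj: "inj_on \<gamma> {..N}" and d: "\<And>k. k \<le> N \<Longrightarrow> d k \<noteq> 0"
    and tau: "\<And>\<eta> \<zeta>. \<eta> \<noteq> 0 \<Longrightarrow> \<zeta> \<noteq> 0 \<Longrightarrow> grid_form \<gamma> N d (1, \<eta>) (1, \<zeta>) = 0 \<Longrightarrow>
      grid_form \<gamma> N d (1, - 1 / cnj \<zeta>) (1, - 1 / cnj \<eta>) = 0"
  shows "\<exists>\<mu>. \<forall>l\<le>N. cnj (d l) = \<mu> * d l"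
proof -
  obtain \<zeta> R where \<zeta>: "\<zeta> \<notin> insert 0 (\<gamma> ` {..N})" and R: "finite R" "card R = N" "0 \<notin> R"
    and roots: "\<forall>\<eta>\<in>R. grid_form \<gamma> N d (1, \<eta>) (1, \<zeta>) = 0"
    using grid_form_fibre_with_distinct_roots[of \<gamma> N d, OF inj d] by blast
  have off_poles: "\<And>i. i \<le> N \<Longrightarrow> \<zeta> \<noteq> \<gamma> i"
    using \<zeta> by auto
  have conj_roots: "grid_form \<gamma> N (\<lambda>k. cnj (d k)) (1, \<eta>) (1, \<zeta>) = 0" if "\<eta> \<in> R" for \<eta>
  proof -
    have nonzero: "\<eta> \<noteq> 0" "\<zeta> \<noteq> 0" using that R(3) \<zeta> by auto
    have "grid_form \<gamma> N d (1, - 1 / cnj \<zeta>) (1, - 1 / cnj \<eta>) = 0"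
      using tau[OF nonzero bspec[OF roots that]] .
    then have "(- 1 / (cnj \<zeta> * cnj \<eta>)) ^ N * cnj (grid_form \<gamma> N (\<lambda>k. cnj (d k)) (1, \<eta>) (1, \<zeta>)) = 0"
      unfolding grid_form_tau[OF nonzero] .
    then show ?thesis using \<open>\<eta> \<noteq> 0\<close> \<open>\<zeta> \<noteq> 0\<close> by simp
  qed
  show ?thesis
    by (rule grid_form_proportional_if_common_roots[OF inj le0 d[OF le0] off_poles R(1,2) bspec[OF roots] conj_roots])
qed

lemma grid_form_cong: "(\<And>k. k \<le> N \<Longrightarrow> d k = d' k) \<Longrightarrow> grid_form \<gamma> N d = grid_form \<gamma> N d'"
  unfolding grid_form_def by (intro ext sum.cong) auto

lemma antidiag_factor:
  "\<exists>\<kappa>. \<kappa> \<noteq> 0 \<and> (\<forall>g. (fst (hc (antip (Some z))) + snd (hc (antip (Some z))) * cnj g) *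
      (snd (hc (Some z)) - g * fst (hc (Some z))) = \<kappa> * of_real ((cmod (z - g))\<^sup>2))"
proof (cases "z = 0")
  case True
  show ?thesis
    by (rule exI[of _ "-1"]) (auto simp: True, metis complex_norm_square mult.commute of_real_power)
next
  case False
  show ?thesis
  proof (intro exI[of _ "1 / cnj z"] conjI allI)
    show "1 / cnj z \<noteq> 0" using False by simp
    fix g
    have "(1 + (- 1 / cnj z) * cnj g) * (z - g) = 1 / cnj z * ((z - g) * cnj (z - g))"
      using False by (simp add: field_simps)
    then show "(fst (hc (antip (Some z))) + snd (hc (antip (Some z))) * cnj g) *
        (snd (hc (Some z)) - g * fst (hc (Some z))) = 1 / cnj z * of_real ((cmod (z - g))\<^sup>2)"
      using False by (simp only: complex_norm_square) simp
  qed
qed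

text \<open>On the antidiagonal each factor of a Lagrange product is a multiple of a squared
  distance, with a factor independent of the pole.\<close>
lemma grid_form_on_antidiag:
  "\<exists>\<kappa>. \<kappa> \<noteq> 0 \<and> grid_form \<gamma> N d (hc (antip (Some z))) (hc (Some z)) =
    \<kappa> * (\<Sum>k\<le>N. d k * of_real (\<Prod>j\<in>{..N} - {k}. (cmod (z - \<gamma> j))\<^sup>2))"
proof -
  define u where "u = hc (antip (Some z))"
  define v where "v = hc (Some z)"
  obtain \<kappa> where \<kappa>: "\<kappa> \<noteq> 0"
    "\<And>g. (fst u + snd u * cnj g) * (snd v - g * fst v) = \<kappa> * of_real ((cmod (z - g))\<^sup>2)"
    using antidiag_factor[of z] unfolding u_def v_def by blast
  have product: "lagrange_fst \<gamma> N k u * lagrange_snd \<gamma> N k v =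
      \<kappa> ^ N * of_real (\<Prod>j\<in>{..N} - {k}. (cmod (z - \<gamma> j))\<^sup>2)" if "k \<le> N" for k
  proof -
    have "lagrange_fst \<gamma> N k u * lagrange_snd \<gamma> N k v =
        (\<Prod>j\<in>{..N} - {k}. \<kappa> * of_real ((cmod (z - \<gamma> j))\<^sup>2))"
      unfolding lagrange_fst_def lagrange_snd_def prod.distrib[symmetric] \<kappa>(2) ..
    also have "\<dots> = \<kappa> ^ N * of_real (\<Prod>j\<in>{..N} - {k}. (cmod (z - \<gamma> j))\<^sup>2)"
      using that by (simp add: prod.distrib)
    finally show ?thesis .
  qed
  have "grid_form \<gamma> N d u v = (\<Sum>k\<le>N. d k * (lagrange_fst \<gamma> N k u * lagrange_snd \<gamma> N k v))"
    unfolding grid_form_def by (simp add: mult.assoc)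
  also have "\<dots> = \<kappa> ^ N * (\<Sum>k\<le>N. d k * of_real (\<Prod>j\<in>{..N} - {k}. (cmod (z - \<gamma> j))\<^sup>2))"
    unfolding sum_distrib_left by (intro sum.cong refl) (simp add: product mult.left_commute)
  finally have "grid_form \<gamma> N d u v =
      \<kappa> ^ N * (\<Sum>k\<le>N. d k * of_real (\<Prod>j\<in>{..N} - {k}. (cmod (z - \<gamma> j))\<^sup>2))" .
  moreover have "\<kappa> ^ N \<noteq> 0" using \<kappa>(1) by simp
  ultimately show ?thesis unfolding u_def v_def by blast
qed

text \<open>At the pole \<gamma> i the sum reduces to its i-th term, whose sign is that of s i; by the
  intermediate value theorem along a segment, a sum without zeros cannot change sign.\<close>
lemma weights_positive_if_nonvanishing:
  fixes s :: "nat \<Rightarrow> real"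
  assumes inj: "inj_on \<gamma> {..N}"
    and nonzero: "\<And>z. (\<Sum>k\<le>N. s k * (\<Prod>j\<in>{..N} - {k}. (cmod (z - \<gamma> j))\<^sup>2)) \<noteq> 0"
    and k: "k \<le> N" "s k > 0" and i: "i \<le> N"
  shows "s i > 0"
proof (rule ccontr)
  assume "\<not> s i > 0"
  define w where "w z = (\<Sum>k\<le>N. s k * (\<Prod>j\<in>{..N} - {k}. (cmod (z - \<gamma> j))\<^sup>2))" for z
  have w_pole: "w (\<gamma> m) = s m * (\<Prod>j\<in>{..N} - {m}. (cmod (\<gamma> m - \<gamma> j))\<^sup>2)" if "m \<le> N" for m
    unfolding w_def by (rule sum_eq_single) (use that in \<open>auto intro!: prod_zero bexI[of _ m]\<close>)
  have distances_pos: "(\<Prod>j\<in>{..N} - {m}. (cmod (\<gamma> m - \<gamma> j))\<^sup>2) > 0" if "m \<le> N" for m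
    using inj that by (intro prod_pos) (auto simp: inj_on_def)
  define f where "f t = w (\<gamma> k + of_real t * (\<gamma> i - \<gamma> k))" for t
  have "f 1 \<le> 0" "0 \<le> f 0"
    using w_pole[OF i] distances_pos[OF i] w_pole[OF k(1)] distances_pos[OF k(1)] k(2) \<open>\<not> s i > 0\<close>
    by (auto simp: f_def mult_nonpos_nonneg)
  moreover have "continuous_on {0..1} f"
    unfolding f_def w_def by (intro continuous_intros)
  ultimately obtain t where "f t = 0"
    using IVT2'[of f 1 0 0] by auto
  then show False using nonzero unfolding f_def w_def by blast
qed

lemma ratio_real_if_common_phase:
  assumes "cnj a = \<mu> * a" "cnj b = \<mu> * b" "a \<noteq> 0"
  shows "b / a \<in> \<real>"
proof -
  have "\<mu> \<noteq> 0" using assms(1,3) by auto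
  then have "cnj (b / a) = b / a" using assms by simp
  then show ?thesis by (simp add: Reals_cnj_iff)
qed

lemma grid_form_eq_real_multiple:
  assumes d0: "d 0 \<noteq> 0" and phase: "\<And>l. l \<le> N \<Longrightarrow> cnj (d l) = \<mu> * d l"
  shows "\<exists>s. s 0 = 1 \<and> grid_form \<gamma> N d = (\<lambda>a b. d 0 * grid_form \<gamma> N (\<lambda>k. of_real (s k)) a b)"
proof -
  define s where "s l = Re (d l / d 0)" for l
  have ds: "d l = d 0 * of_real (s l)" if "l \<le> N" for l
  proof -
    have "d l / d 0 \<in> \<real>"
      by (rule ratio_real_if_common_phase[OF phase[OF le0] phase[OF that] d0])
    then show ?thesis using d0 by (simp add: s_def)
  qed
  have "grid_form \<gamma> N d = (\<lambda>a b. d 0 * grid_form \<gamma> N (\<lambda>k. of_real (s k)) a b)"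
    unfolding grid_form_def sum_distrib_left
  proof (intro ext sum.cong refl)
    fix k a b assume "k \<in> {..N}"
    then show "d k * lagrange_fst \<gamma> N k a * lagrange_snd \<gamma> N k b =
        d 0 * (of_real (s k) * lagrange_fst \<gamma> N k a * lagrange_snd \<gamma> N k b)"
      using ds[of k] by (simp add: mult.assoc)
  qed
  moreover have "s 0 = 1" using d0 by (simp add: s_def)
  ultimately show ?thesis by blast
qed

lemma grid_form_eq_scaled_jnr_hom:
  assumes inj: "inj_on \<gamma> {..N}" and d0: "d 0 \<noteq> 0"
    and phase: "\<And>l. l \<le> N \<Longrightarrow> cnj (d l) = \<mu> * d l"
    and antidiag: "\<And>z. grid_form \<gamma> N d (hc (antip (Some z))) (hc (Some z)) \<noteq> 0"
  shows "\<exists>lam. (\<forall>i\<le>N. lam i > 0) \<and> grid_form \<gamma> N d = (\<lambda>a b. d 0 * jnr_hom N \<gamma> lam a b)"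
proof -
  obtain s where s0: "s 0 = 1"
    and scaled: "grid_form \<gamma> N d = (\<lambda>a b. d 0 * grid_form \<gamma> N (\<lambda>k. of_real (s k)) a b)"
    using grid_form_eq_real_multiple[of d N \<mu> \<gamma>, OF d0 phase] by blast
  have "(\<Sum>k\<le>N. s k * (\<Prod>j\<in>{..N} - {k}. (cmod (z - \<gamma> j))\<^sup>2)) \<noteq> 0" for z
  proof
    assume sum_zero: "(\<Sum>k\<le>N. s k * (\<Prod>j\<in>{..N} - {k}. (cmod (z - \<gamma> j))\<^sup>2)) = 0"
    obtain \<kappa> where \<kappa>: "grid_form \<gamma> N (\<lambda>k. of_real (s k)) (hc (antip (Some z))) (hc (Some z)) =
        \<kappa> * (\<Sum>k\<le>N. of_real (s k) * of_real (\<Prod>j\<in>{..N} - {k}. (cmod (z - \<gamma> j))\<^sup>2))"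
      using grid_form_on_antidiag by blast
    have "(\<Sum>k\<le>N. of_real (s k) * of_real (\<Prod>j\<in>{..N} - {k}. (cmod (z - \<gamma> j))\<^sup>2)) =
        (of_real (\<Sum>k\<le>N. s k * (\<Prod>j\<in>{..N} - {k}. (cmod (z - \<gamma> j))\<^sup>2)) :: complex)"
      by simp
    then have "grid_form \<gamma> N (\<lambda>k. of_real (s k)) (hc (antip (Some z))) (hc (Some z)) = 0"
      using \<kappa> sum_zero by simp
    then show False
      using antidiag[of z] unfolding scaled by simp
  qed
  then have s_pos: "s i > 0" if "i \<le> N" for i
    using weights_positive_if_nonvanishing[OF inj _ le0 _ that] s0 by simp
  define lam where "lam i = sqrt (s i)" for i
  have "grid_form \<gamma> N (\<lambda>k. of_real ((lam k)\<^sup>2)) = grid_form \<gamma> N (\<lambda>k. of_real (s k))"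
    by (rule grid_form_cong) (simp add: lam_def s_pos less_imp_le)
  then have "grid_form \<gamma> N d = (\<lambda>a b. d 0 * jnr_hom N \<gamma> lam a b)"
    unfolding scaled jnr_hom_eq_grid_form by simp
  moreover have "\<forall>i\<le>N. lam i > 0"
    using s_pos by (simp add: lam_def)
  ultimately show ?thesis by blast
qed

lemma curve_of_scale: "u \<noteq> 0 \<Longrightarrow> curve_of (\<lambda>a b. u * F a b) = curve_of F"
  by (simp add: curve_of_def)

lemma curve_of_disjoint_antidiag:
  "curve_of F \<inter> antidiag = {} \<Longrightarrow> F (hc (antip (Some z))) (hc (Some z)) \<noteq> 0"
  unfolding curve_of_def antidiag_def by blast

lemma tau_invariant_curve_reflects_zeros:
  assumes "tau ` curve_of F = curve_of F" "\<eta> \<noteq> 0" "\<zeta> \<noteq> 0" "F (1, \<eta>) (1, \<zeta>) = 0"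
  shows "F (1, - 1 / cnj \<zeta>) (1, - 1 / cnj \<eta>) = 0"
proof -
  have "(Some \<eta>, Some \<zeta>) \<in> curve_of F"
    using assms(4) by (simp add: curve_of_def)
  then have "tau (Some \<eta>, Some \<zeta>) \<in> curve_of F"
    using assms(1) by blast
  then show ?thesis using assms(2,3) by (simp add: tau_def curve_of_def)
qed

theorem mainTheorem3:
  fixes N :: nat and c :: "nat \<Rightarrow> nat \<Rightarrow> complex" and S :: "(P1 \<times> P1) set"
    and \<gamma> :: "nat \<Rightarrow> complex"
  assumes "N \<ge> 1"
    and "\<exists>i\<le>N. \<exists>j\<le>N. c i j \<noteq> 0"
    and "S = curve_of (bihom N c)"
    and "tau ` S = S"
    and "S \<inter> antidiag = {}"
    and "inj_on \<gamma> {..N}"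
    and "\<forall>i\<le>N. \<forall>j\<le>N. i \<noteq> j \<longrightarrow> (antip (Some (\<gamma> i)), Some (\<gamma> j)) \<in> S"
  shows "\<exists>lam :: nat \<Rightarrow> real. (\<forall>i\<le>N. lam i > 0) \<and> S = curve_of (jnr_hom N \<gamma> lam)"
proof -
  note S = assms(3) and inj = assms(6)
  obtain d where d: "bihom N c = grid_form \<gamma> N d"
    using bihom_eq_grid_form[OF inj] assms(7) unfolding S curve_of_def by blast
  have antidiag: "\<And>z. grid_form \<gamma> N d (hc (antip (Some z))) (hc (Some z)) \<noteq> 0"
    using curve_of_disjoint_antidiag assms(5) unfolding S d by blast
  have nonzero: "d k \<noteq> 0" if "k \<le> N" for k
    using antidiag[of "\<gamma> k"] grid_form_at_diagonal_grid_point[OF inj that] by auto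
  have tau: "grid_form \<gamma> N d (1, - 1 / cnj \<zeta>) (1, - 1 / cnj \<eta>) = 0"
    if "\<eta> \<noteq> 0" "\<zeta> \<noteq> 0" "grid_form \<gamma> N d (1, \<eta>) (1, \<zeta>) = 0" for \<eta> \<zeta>
    using tau_invariant_curve_reflects_zeros assms(4) that unfolding S d by blast
  obtain \<mu> where "\<forall>l\<le>N. cnj (d l) = \<mu> * d l"
    using grid_form_common_phase[of \<gamma> N d, OF inj nonzero tau] by blast
  then obtain lam where "\<forall>i\<le>N. lam i > 0" "grid_form \<gamma> N d = (\<lambda>a b. d 0 * jnr_hom N \<gamma> lam a b)"
    using grid_form_eq_scaled_jnr_hom[OF inj nonzero[OF le0] _ antidiag] by blast
  then show ?thesis
    using nonzero[of 0] unfolding S d by (auto simp: curve_of_scale)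
qed

end
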